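(* Let $0\le\alpha<n$, $m$ a nonnegative integer, $0<\eta\le1$, $0<\delta<\min\{\eta,(n-\alpha)/m\}$, $1\le r\le\infty$, $\tilde\alpha=m\delta+\alpha$, $\tilde\delta\le\delta$. If $(w,v)\in\mathbb{H}(r,\tilde\alpha,\tilde\delta)$, then there is $C>0$ such that for every ball $B$, $$\|v\chi_{2B}\|_{L^{r'}}\le C\,|B|^{(\tilde\delta-\tilde\alpha)/n}\,w(B).$$
   Context: A weight is a nonnegative locally integrable function; $w(B)=\int_Bw$; $x_B$ is the center of $B$ and $2B$ the concentric ball with twice the radius; $r'$ is the conjugate exponent. $(w,v)\in\mathbb{H}(r,\tilde\alpha,\tilde\delta)$ means that for some $C$ and every ball $B$: if $1<r\le\infty$, $|B|^{(\delta-\tilde\delta)/n}\big(\int\frac{v^{r'}(y)}{(|B|^{1/n}+|x_B-y|)^{r'(n-\tilde\alpha+\delta)}}dy\big)^{1/r'}\le C\frac{w(B)}{|B|}$; if $r=1$, $|B|^{(\delta-\tilde\delta)/n}\big\|\frac{v(\cdot)}{(|B|^{1/n}+|x_B-\cdot|)^{n-\tilde\alpha+\delta}}\big\|_\infty\le C\frac{w(B)}{|B|}$. If $m=0$, $(n-\alpha)/m$ is read as $+\infty$. *)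

theory Defs
  imports "HOL-Analysis.Analysis" "HOL-Probability.Essential_Supremum"
begin

definition weight :: "('a::euclidean_space \<Rightarrow> real) \<Rightarrow> bool" where
  "weight w \<longleftrightarrow> (\<forall>x. 0 \<le> w x) \<and> (\<forall>K. compact K \<longrightarrow> set_integrable lborel K w)"

definition wmeas :: "('a::euclidean_space \<Rightarrow> real) \<Rightarrow> 'a set \<Rightarrow> real" where
  "wmeas w B = (LINT y:B|lborel. w y)"

definition conj_exp :: "ereal \<Rightarrow> ereal" where
  "conj_exp r = (if r = 1 then \<infinity> else if r = \<infinity> then 1 else r / (r - 1))"

definition enn_root :: "real \<Rightarrow> ennreal \<Rightarrow> ennreal" where
  "enn_root p x = (if x = \<infinity> then \<infinity> else ennreal (enn2real x powr (1 / p)))"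

definition Lnorm :: "ereal \<Rightarrow> ('a::euclidean_space \<Rightarrow> real) \<Rightarrow> ennreal" where
  "Lnorm p f = (if p = \<infinity> then esssup lborel (\<lambda>x. ennreal \<bar>f x\<bar>)
     else enn_root (real_of_ereal p) (\<integral>\<^sup>+ x. ennreal (\<bar>f x\<bar> powr real_of_ereal p) \<partial>lborel))"

text \<open>The class H(r, alpha~, delta~) (which also depends on delta).  The weighted
  integral in the definition equals the L^{r'} norm of
  y |-> v y / (|B|^{1/n} + |x_B - y|)^{n - alpha~ + delta}; for r = 1 (r' = infinity)
  it is the (essential) sup norm.\<close>
definition Hclass :: "ereal \<Rightarrow> real \<Rightarrow> real \<Rightarrow> real \<Rightarrow>
    ('a::euclidean_space \<Rightarrow> real) \<Rightarrow> ('a \<Rightarrow> real) \<Rightarrow> bool" where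
  "Hclass r alt dt d w v \<longleftrightarrow> (\<exists>C::real. \<forall>x \<rho>. 0 < \<rho> \<longrightarrow>
     (let B = ball x \<rho>; mB = measure lborel B in
       ennreal (mB powr ((d - dt) / real DIM('a))) *
         Lnorm (conj_exp r) (\<lambda>y. v y / (mB powr (1 / real DIM('a)) + dist x y) powr (real DIM('a) - alt + d))
       \<le> ennreal (C * wmeas w B / mB)))"

end

theory Submission
  imports Defs
begin

text \<open>On the doubled ball \<open>2B\<close> the distance \<open>|x\<^sub>B - y|\<close> is at most a dimensional multiple
  of \<open>|B|\<^bsup>1/n\<^esup>\<close>, so there \<open>|B|\<^bsup>1/n\<^esup> + |x\<^sub>B - y| \<le> K |B|\<^bsup>1/n\<^esup>\<close>. Hence
  \<open>v \<chi>\<^sub>2\<^sub>B\<close> is dominated pointwise by \<open>(K |B|\<^bsup>1/n\<^esup>)\<^bsup>e\<^esup>\<close> times the function whose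
  \<open>L\<^bsup>r'\<^esup>\<close> norm the condition \<open>\<bbbH>(r, \<alpha>~, \<delta>~)\<close> controls, with \<open>e = n - \<alpha>~ + \<delta> \<ge> 0\<close>.
  The powers of \<open>|B|\<close> then combine to \<open>|B|\<^bsup>(\<delta>~ - \<alpha>~)/n\<^esup>\<close>.\<close>

lemma borel_measurable_weight:
  fixes v :: "'a::euclidean_space \<Rightarrow> real"
  assumes "weight v"
  shows "v \<in> borel_measurable lborel"
proof -
  have "(\<lambda>y. indicator (cball 0 (real k)) y *\<^sub>R v y) \<in> borel_measurable lborel" for k :: nat
  proof -
    have "set_integrable lborel (cball 0 (real k)) v"
      using assms compact_cball unfolding weight_def by blast
    then show ?thesis
      unfolding set_integrable_def by (rule borel_measurable_integrable)
  qed
  moreover have "(\<lambda>k. indicator (cball 0 (real k)) y *\<^sub>R v y) \<longlonglongrightarrow> v y" for y :: 'a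
  proof (rule tendsto_eventually)
    obtain N :: nat where "norm y \<le> real N"
      using real_arch_simple by blast
    then show "\<forall>\<^sub>F k in sequentially. indicator (cball 0 (real k)) y *\<^sub>R v y = v y"
      unfolding eventually_sequentially
      by (intro exI[of _ N]) (auto simp: indicator_def dist_norm)
  qed
  ultimately show ?thesis
    by (rule borel_measurable_LIMSEQ_real[rotated])
qed

lemma wmeas_nonneg: "weight w \<Longrightarrow> 0 \<le> wmeas w B"
  unfolding wmeas_def set_lebesgue_integral_def weight_def
  by (intro Bochner_Integration.integral_nonneg) (simp add: indicator_def)

lemma one_le_conj_exp:
  assumes "1 \<le> r"
  shows "1 \<le> conj_exp r"
proof (cases r)
  case (real t)
  show ?thesis
  proof (cases "t = 1")
    case True
    then show ?thesis using real by (simp add: conj_exp_def)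
  next
    case False
    then have "1 < t" using assms real by auto
    then have "conj_exp r = ereal (t / (t - 1))"
      using real False unfolding conj_exp_def
      by (simp add: one_ereal_def divide_ereal_def divide_inverse)
    moreover have "1 \<le> t / (t - 1)"
      using \<open>1 < t\<close> by (simp add: le_divide_eq)
    ultimately show ?thesis by (simp add: one_ereal_def)
  qed
qed (use assms in \<open>simp_all add: conj_exp_def\<close>)

lemma enn_root_mono:
  assumes "0 < q" "x \<le> y"
  shows "enn_root q x \<le> enn_root q y"
proof (cases "y = \<infinity>")
  case False
  then have "x \<noteq> \<infinity>"
    using assms top.extremum_unique by fastforce
  then show ?thesis
    using False assms
    by (auto simp: enn_root_def less_top[symmetric] intro!: ennreal_leI powr_mono2 enn2real_mono)
qed (simp add: enn_root_def)

lemma enn_root_mult_powr: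
  assumes "0 < q" "0 \<le> M"
  shows "enn_root q (ennreal (M powr q) * I) = ennreal M * enn_root q I"
proof (cases "I = \<infinity>")
  case True
  then show ?thesis
    using assms by (cases "M = 0") (simp_all add: enn_root_def ennreal_mult_top)
next
  case False
  have "(M powr q * enn2real I) powr (1 / q) = M * enn2real I powr (1 / q)"
    using assms by (simp add: powr_mult powr_powr)
  then show ?thesis
    using False assms by (simp add: enn_root_def enn2real_mult ennreal_mult_eq_top_iff ennreal_mult)
qed

lemma Lnorm_le_mult:
  fixes f g :: "'a::euclidean_space \<Rightarrow> real"
  assumes "1 \<le> p" "f \<in> borel_measurable lborel" "g \<in> borel_measurable lborel"
    and "0 \<le> M" and le: "\<And>y. \<bar>f y\<bar> \<le> M * \<bar>g y\<bar>"
  shows "Lnorm p f \<le> ennreal M * Lnorm p g"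
proof (cases "p = \<infinity>")
  case True
  have "AE y in lborel. ennreal \<bar>g y\<bar> \<le> esssup lborel (\<lambda>y. ennreal \<bar>g y\<bar>)"
    by (rule esssup_AE)
  then have "AE y in lborel. ennreal \<bar>f y\<bar> \<le> ennreal M * esssup lborel (\<lambda>y. ennreal \<bar>g y\<bar>)"
  proof eventually_elim
    case (elim y)
    have "ennreal \<bar>f y\<bar> \<le> ennreal M * ennreal \<bar>g y\<bar>"
      using le \<open>0 \<le> M\<close> by (simp add: ennreal_mult[symmetric] ennreal_leI)
    also have "\<dots> \<le> ennreal M * esssup lborel (\<lambda>y. ennreal \<bar>g y\<bar>)"
      using elim by (rule mult_left_mono) simp
    finally show ?case .
  qed
  then show ?thesis
    using True assms(2) unfolding Lnorm_def by (simp add: esssup_I)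
next
  case False
  then obtain q where q: "p = ereal q" "1 \<le> q"
    using \<open>1 \<le> p\<close> by (cases p) auto
  have "(\<integral>\<^sup>+ y. ennreal (\<bar>f y\<bar> powr q) \<partial>lborel)
      \<le> (\<integral>\<^sup>+ y. ennreal (M powr q) * ennreal (\<bar>g y\<bar> powr q) \<partial>lborel)"
  proof (rule nn_integral_mono)
    fix y
    have "\<bar>f y\<bar> powr q \<le> (M * \<bar>g y\<bar>) powr q"
      using q le by (intro powr_mono2) auto
    also have "\<dots> = M powr q * \<bar>g y\<bar> powr q"
      using \<open>0 \<le> M\<close> by (simp add: powr_mult)
    finally show "ennreal (\<bar>f y\<bar> powr q) \<le> ennreal (M powr q) * ennreal (\<bar>g y\<bar> powr q)"
      by (simp add: ennreal_mult[symmetric] ennreal_leI)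
  qed
  also have "\<dots> = ennreal (M powr q) * (\<integral>\<^sup>+ y. ennreal (\<bar>g y\<bar> powr q) \<partial>lborel)"
    using assms(3) by (intro nn_integral_cmult) simp
  finally have "enn_root q (\<integral>\<^sup>+ y. ennreal (\<bar>f y\<bar> powr q) \<partial>lborel)
      \<le> enn_root q (ennreal (M powr q) * (\<integral>\<^sup>+ y. ennreal (\<bar>g y\<bar> powr q) \<partial>lborel))"
    using q by (intro enn_root_mono) auto
  also have "\<dots> = ennreal M * enn_root q (\<integral>\<^sup>+ y. ennreal (\<bar>g y\<bar> powr q) \<partial>lborel)"
    using q \<open>0 \<le> M\<close> by (intro enn_root_mult_powr) auto
  finally show ?thesis
    using q unfolding Lnorm_def by simp
qed

lemma ennreal_le_divide_if_mult_le:
  assumes "0 < s" "ennreal s * a \<le> ennreal t"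
  shows "a \<le> ennreal (t / s)"
proof -
  have "a = ennreal (1 / s) * (ennreal s * a)"
    using assms(1) by (simp add: mult.assoc[symmetric] ennreal_mult[symmetric])
  also have "\<dots> \<le> ennreal (1 / s) * ennreal t"
    using assms(2) by (rule mult_left_mono) simp
  also have "\<dots> = ennreal (t / s)"
    using assms(1) by (simp add: ennreal_mult'[symmetric])
  finally show ?thesis .
qed

lemma measure_ball_root:
  assumes "0 \<le> \<rho>"
  shows "measure lborel (ball (x::'a::euclidean_space) \<rho>) powr (1 / real DIM('a))
    = unit_ball_vol (real DIM('a)) powr (1 / real DIM('a)) * \<rho>"
proof -
  have "(\<rho> ^ DIM('a)) powr (1 / real DIM('a)) = \<rho>"
    using assms by (cases "\<rho> = 0") (simp_all add: powr_realpow[symmetric] powr_powr)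
  then show ?thesis
    using assms by (simp add: content_ball powr_mult)
qed

lemma Lnorm_indicator_double_ball_le:
  fixes v :: "'a::euclidean_space \<Rightarrow> real" and x :: 'a and \<rho> :: real
  defines "K \<equiv> 1 + 2 / unit_ball_vol (real DIM('a)) powr (1 / real DIM('a))"
    and "a \<equiv> measure lborel (ball x \<rho>) powr (1 / real DIM('a))"
  assumes "1 \<le> p" "v \<in> borel_measurable lborel" "0 \<le> e" "0 < \<rho>"
  shows "Lnorm p (\<lambda>y. v y * indicator (ball x (2 * \<rho>)) y)
    \<le> ennreal ((K * a) powr e) * Lnorm p (\<lambda>y. v y / (a + dist x y) powr e)"
proof (rule Lnorm_le_mult)
  have "0 < a"
    using \<open>0 < \<rho>\<close> unfolding a_def by simp
  have "unit_ball_vol (real DIM('a)) \<noteq> 0"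
    using unit_ball_vol_pos[of "real DIM('a)"] by linarith
  then have Ka: "K * a = a + 2 * \<rho>"
    unfolding K_def a_def using \<open>0 < \<rho>\<close> by (simp add: measure_ball_root field_simps)
  show "\<bar>v y * indicator (ball x (2 * \<rho>)) y\<bar> \<le> (K * a) powr e * \<bar>v y / (a + dist x y) powr e\<bar>" for y
  proof (cases "y \<in> ball x (2 * \<rho>)")
    case True
    have "0 < a + dist x y"
      using \<open>0 < a\<close> by (simp add: add_pos_nonneg)
    have "(a + dist x y) powr e \<le> (K * a) powr e"
      unfolding Ka using True \<open>0 \<le> e\<close> \<open>0 < a\<close> by (intro powr_mono2) auto
    then have "\<bar>v y\<bar> * (a + dist x y) powr e \<le> \<bar>v y\<bar> * (K * a) powr e"
      by (rule mult_left_mono) simp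
    then show ?thesis
      using True \<open>0 < a + dist x y\<close> by (simp add: abs_mult pos_le_divide_eq mult.commute)
  qed simp
next
  show "(\<lambda>y. v y * indicator (ball x (2 * \<rho>)) y) \<in> borel_measurable lborel"
    using assms(4) by (intro borel_measurable_times borel_measurable_indicator) simp_all
qed (use assms in simp_all)

lemma Hclass_Lnorm_le:
  fixes w v :: "'a::euclidean_space \<Rightarrow> real"
  assumes "Hclass r alt dt d w v" "weight w"
  obtains C where "0 < C" and "\<And>x \<rho>. 0 < \<rho> \<Longrightarrow>
    Lnorm (conj_exp r) (\<lambda>y. v y / (measure lborel (ball x \<rho>) powr (1 / real DIM('a)) + dist x y)
                                  powr (real DIM('a) - alt + d))
      \<le> ennreal (C * wmeas w (ball x \<rho>) / measure lborel (ball x \<rho>)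
                   / measure lborel (ball x \<rho>) powr ((d - dt) / real DIM('a)))"
proof -
  obtain C where HC: "\<And>x \<rho>. 0 < \<rho> \<Longrightarrow>
      ennreal (measure lborel (ball x \<rho>) powr ((d - dt) / real DIM('a))) *
        Lnorm (conj_exp r) (\<lambda>y. v y / (measure lborel (ball x \<rho>) powr (1 / real DIM('a)) + dist x y)
                                      powr (real DIM('a) - alt + d))
      \<le> ennreal (C * wmeas w (ball x \<rho>) / measure lborel (ball x \<rho>))"
    using assms(1) unfolding Hclass_def Let_def by blast
  show thesis
  proof (rule that[of "max C 1"])
    fix x :: 'a and \<rho> :: real
    assume "0 < \<rho>"
    have "C * wmeas w (ball x \<rho>) / measure lborel (ball x \<rho>)
        \<le> max C 1 * wmeas w (ball x \<rho>) / measure lborel (ball x \<rho>)"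
      using wmeas_nonneg[OF assms(2)] by (intro divide_right_mono mult_right_mono) auto
    then show "Lnorm (conj_exp r) (\<lambda>y. v y / (measure lborel (ball x \<rho>) powr (1 / real DIM('a)) + dist x y)
                                           powr (real DIM('a) - alt + d))
      \<le> ennreal (max C 1 * wmeas w (ball x \<rho>) / measure lborel (ball x \<rho>)
                   / measure lborel (ball x \<rho>) powr ((d - dt) / real DIM('a)))"
      using \<open>0 < \<rho>\<close> by (intro ennreal_le_divide_if_mult_le order_trans[OF HC] ennreal_leI) simp_all
  qed simp
qed

lemma powr_root_exponents_combine:
  fixes K \<mu> n :: real
  assumes "0 < K" "0 < \<mu>" "0 < n"
  shows "(K * \<mu> powr (1 / n)) powr (n - alt + d) * (c / \<mu> / \<mu> powr ((d - dt) / n))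
    = K powr (n - alt + d) * c * \<mu> powr ((dt - alt) / n)"
proof -
  have "(n - alt + d) / n = (dt - alt) / n + 1 + (d - dt) / n"
    using \<open>0 < n\<close> by (simp add: field_simps)
  then have "\<mu> powr ((n - alt + d) / n) = \<mu> powr ((dt - alt) / n) * \<mu> * \<mu> powr ((d - dt) / n)"
    using \<open>0 < \<mu>\<close> by (simp add: powr_add)
  then show ?thesis
    using assms by (simp add: powr_mult powr_powr field_simps)
qed

lemma Hclass_double_ball_bound:
  fixes w v :: "'a::euclidean_space \<Rightarrow> real"
  assumes "Hclass r alt dt d w v" "1 \<le> r" "weight w" "weight v"
    and "0 \<le> real DIM('a) - alt + d"
  shows "\<exists>C>0. \<forall>x \<rho>. 0 < \<rho> \<longrightarrow>
    Lnorm (conj_exp r) (\<lambda>y. v y * indicator (ball x (2 * \<rho>)) y)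
      \<le> ennreal (C * measure lborel (ball x \<rho>) powr ((dt - alt) / real DIM('a))
                 * wmeas w (ball x \<rho>))"
proof -
  define n where "n = real DIM('a)"
  define e where "e = n - alt + d"
  define K where "K = 1 + 2 / unit_ball_vol n powr (1 / n)"
  obtain C where "0 < C" and HC: "\<And>x \<rho>. 0 < \<rho> \<Longrightarrow>
      Lnorm (conj_exp r) (\<lambda>y. v y / (measure lborel (ball x \<rho>) powr (1 / n) + dist x y) powr e)
      \<le> ennreal (C * wmeas w (ball x \<rho>) / measure lborel (ball x \<rho>)
                   / measure lborel (ball x \<rho>) powr ((d - dt) / n))"
    using Hclass_Lnorm_le[OF assms(1,3)] unfolding n_def e_def by blast
  have "0 < K"
    unfolding K_def n_def by (simp add: add_pos_nonneg)
  show ?thesis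
  proof (intro exI[of _ "K powr e * C"] conjI allI impI)
    show "0 < K powr e * C"
      using \<open>0 < K\<close> \<open>0 < C\<close> by simp
    fix x :: 'a and \<rho> :: real
    assume "0 < \<rho>"
    define \<mu> where "\<mu> = measure lborel (ball x \<rho>)"
    have "0 < \<mu>"
      using \<open>0 < \<rho>\<close> unfolding \<mu>_def by simp
    have "Lnorm (conj_exp r) (\<lambda>y. v y * indicator (ball x (2 * \<rho>)) y)
        \<le> ennreal ((K * \<mu> powr (1 / n)) powr e)
          * Lnorm (conj_exp r) (\<lambda>y. v y / (\<mu> powr (1 / n) + dist x y) powr e)"
      using assms(2,4,5) \<open>0 < \<rho>\<close> unfolding K_def \<mu>_def e_def n_def
      by (intro Lnorm_indicator_double_ball_le one_le_conj_exp borel_measurable_weight)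
    also have "\<dots> \<le> ennreal ((K * \<mu> powr (1 / n)) powr e)
          * ennreal (C * wmeas w (ball x \<rho>) / \<mu> / \<mu> powr ((d - dt) / n))"
      using HC[OF \<open>0 < \<rho>\<close>] unfolding \<mu>_def by (rule mult_left_mono) simp
    also have "\<dots> = ennreal ((K * \<mu> powr (1 / n)) powr e
          * (C * wmeas w (ball x \<rho>) / \<mu> / \<mu> powr ((d - dt) / n)))"
      by (rule ennreal_mult'[symmetric]) simp
    also have "\<dots> = ennreal (K powr e * (C * wmeas w (ball x \<rho>)) * \<mu> powr ((dt - alt) / n))"
      unfolding e_def using \<open>0 < K\<close> \<open>0 < \<mu>\<close>
      by (intro arg_cong[where f = ennreal] powr_root_exponents_combine) (simp_all add: n_def)
    also have "\<dots> = ennreal (K powr e * C * \<mu> powr ((dt - alt) / n) * wmeas w (ball x \<rho>))"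
      by (simp add: ac_simps)
    finally show "Lnorm (conj_exp r) (\<lambda>y. v y * indicator (ball x (2 * \<rho>)) y)
        \<le> ennreal (K powr e * C * measure lborel (ball x \<rho>) powr ((dt - alt) / real DIM('a))
                 * wmeas w (ball x \<rho>))"
      unfolding \<mu>_def n_def .
  qed
qed

theorem lemma3p1:
  fixes w v :: "'a::euclidean_space \<Rightarrow> real"
    and \<alpha> \<eta> \<delta> \<delta>t :: real and m :: nat and r :: ereal
  assumes "0 \<le> \<alpha>" "\<alpha> < real DIM('a)"
    and "0 < \<eta>" "\<eta> \<le> 1"
    and "0 < \<delta>" "\<delta> < \<eta>" "m = 0 \<or> \<delta> < (real DIM('a) - \<alpha>) / real m"
    and "1 \<le> r"
    and "\<delta>t \<le> \<delta>"
    and "weight w" "weight v"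
    and "Hclass r (real m * \<delta> + \<alpha>) \<delta>t \<delta> w v"
  shows "\<exists>C>0. \<forall>x \<rho>. 0 < \<rho> \<longrightarrow>
    Lnorm (conj_exp r) (\<lambda>y. v y * indicator (ball x (2 * \<rho>)) y)
      \<le> ennreal (C * measure lborel (ball x \<rho>) powr ((\<delta>t - (real m * \<delta> + \<alpha>)) / real DIM('a))
                 * wmeas w (ball x \<rho>))"
proof (rule Hclass_double_ball_bound)
  have "real m * \<delta> \<le> real DIM('a) - \<alpha>"
  proof (cases "m = 0")
    case False
    then show ?thesis
      using assms(7) by (simp add: less_divide_eq less_imp_le mult.commute)
  qed (use assms(2) in simp)
  then show "0 \<le> real DIM('a) - (real m * \<delta> + \<alpha>) + \<delta>"
    using assms(5) by simp
qed (use assms in simp_all)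

end
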